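(* For $p+q\ge4$, $HL^0(\mathfrak h_{p,q};\mathfrak h_{p,q})=0$ and $HL^1(\mathfrak h_{p,q};\mathfrak h_{p,q})=\langle I\rangle$ (one-dimensional), where $I:\mathfrak h_{p,q}\to\mathfrak h_{p,q}$ is the linear map with $I(\alpha_{ij})=0$, $I(\beta_{ij})=0$ and $I(\partial_i)=\partial_i$ for $i=1,\dots,n$.
   Context: Let $p,q$ be nonnegative integers, $n=p+q$. On $\mathbf R^n$ write $\partial_i=\partial/\partial x^i$; $\alpha_{ij}=x_i\partial_j-x_j\partial_i$ ($1\le i<j\le p$ or $p+1\le i<j\le n$), $\beta_{ij}=x_i\partial_j+x_j\partial_i$ ($1\le i\le p<j\le n$); $\mathfrak h_{p,q}$ is the Lie algebra of vector fields with basis $\{\alpha_{ij}\}\cup\{\beta_{ij}\}\cup\{\partial_i\}$. For a Leibniz (e.g. Lie) algebra $\mathfrak g$ and representation $V$ (here $V=\mathfrak g$ with the bracket), $HL^*(\mathfrak g;V)$ is the cohomology of $CL^k=\mathrm{Hom}(\mathfrak g^{\otimes k},V)$ with coboundary $\delta f(g_1\otimes\cdots\otimes g_{k+1})=[g_1,f(g_2\otimes\cdots\otimes g_{k+1})]+\sum_{i=2}^{k+1}(-1)^i[f(g_1\otimes\cdots\widehat{g_i}\cdots\otimes g_{k+1}),g_i]+\sum_{1\le i<j\le k+1}(-1)^{j+1}f(g_1\otimes\cdots\otimes g_{i-1}\otimes[g_i,g_j]\otimes\cdots\widehat{g_j}\cdots\otimes g_{k+1})$. *)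

theory Defs
  imports "HOL-Analysis.Analysis"
begin

text \<open>Vector fields on R^n: a field X assigns to a point x (coordinates x 1, ..., x n)
  its component vector (components 1..n).  Coordinates/components are 1-based.\<close>
type_synonym vf = "(nat \<Rightarrow> real) \<Rightarrow> nat \<Rightarrow> real"

definition vzero :: vf where "vzero = (\<lambda>x k. 0)"
definition vadd :: "vf \<Rightarrow> vf \<Rightarrow> vf" where "vadd X Y = (\<lambda>x k. X x k + Y x k)"
definition vsc :: "real \<Rightarrow> vf \<Rightarrow> vf" where "vsc c X = (\<lambda>x k. c * X x k)"

definition pd :: "nat \<Rightarrow> ((nat \<Rightarrow> real) \<Rightarrow> real) \<Rightarrow> (nat \<Rightarrow> real) \<Rightarrow> real" where
  "pd l f x = deriv (\<lambda>t. f (x(l := t))) (x l)"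

definition br :: "nat \<Rightarrow> nat \<Rightarrow> vf \<Rightarrow> vf \<Rightarrow> vf" where
  "br p q X Y = (\<lambda>x k. \<Sum>l=1..p+q. X x l * pd l (\<lambda>y. Y y k) x - Y x l * pd l (\<lambda>y. X y k) x)"

definition alpha :: "nat \<Rightarrow> nat \<Rightarrow> vf" where
  "alpha i j = (\<lambda>x k. if k = j then x i else if k = i then - x j else 0)"
definition beta :: "nat \<Rightarrow> nat \<Rightarrow> vf" where
  "beta i j = (\<lambda>x k. if k = j then x i else if k = i then x j else 0)"
definition part :: "nat \<Rightarrow> vf" where
  "part i = (\<lambda>x k. if k = i then 1 else 0)"

definition Aidx :: "nat \<Rightarrow> nat \<Rightarrow> (nat \<times> nat) set" where
  "Aidx p q = {(i,j). (1 \<le> i \<and> i < j \<and> j \<le> p) \<or> (p+1 \<le> i \<and> i < j \<and> j \<le> p+q)}"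
definition Bidx :: "nat \<Rightarrow> nat \<Rightarrow> (nat \<times> nat) set" where
  "Bidx p q = {(i,j). 1 \<le> i \<and> i \<le> p \<and> p < j \<and> j \<le> p+q}"

definition lincomb :: "nat \<Rightarrow> nat \<Rightarrow> (nat \<times> nat \<Rightarrow> real) \<Rightarrow> (nat \<times> nat \<Rightarrow> real) \<Rightarrow> (nat \<Rightarrow> real) \<Rightarrow> vf" where
  "lincomb p q a b c = (\<lambda>x k. (\<Sum>(i,j)\<in>Aidx p q. a (i,j) * alpha i j x k)
       + (\<Sum>(i,j)\<in>Bidx p q. b (i,j) * beta i j x k)
       + (\<Sum>i=1..p+q. c i * part i x k))"

definition hpq :: "nat \<Rightarrow> nat \<Rightarrow> vf set" where
  "hpq p q = {X. \<exists>a b c. X = lincomb p q a b c}"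

definition Imap :: "nat \<Rightarrow> nat \<Rightarrow> vf \<Rightarrow> vf" where
  "Imap p q X = (SOME Y. \<exists>a b c. X = lincomb p q a b c \<and> Y = lincomb p q (\<lambda>_. 0) (\<lambda>_. 0) c)"

text \<open>Leibniz cochains: CL^k = Hom(g^{\<otimes>k}, g), i.e. k-multilinear maps h^k \<rightarrow> h,
  represented as functions on lists of length k (only values on h^k matter).\<close>
definition CL :: "nat \<Rightarrow> nat \<Rightarrow> nat \<Rightarrow> (vf list \<Rightarrow> vf) set" where
  "CL p q k = {f. \<forall>xs. length xs = k \<and> set xs \<subseteq> hpq p q \<longrightarrow>
      f xs \<in> hpq p q \<and>
      (\<forall>i<k. \<forall>u\<in>hpq p q. \<forall>v\<in>hpq p q. \<forall>c.
          f (xs[i := vadd u (vsc c v)]) = vadd (f (xs[i := u])) (vsc c (f (xs[i := v]))))}"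

definition del :: "nat \<Rightarrow> 'a list \<Rightarrow> 'a list" where
  "del a xs = take a xs @ drop (Suc a) xs"

text \<open>Leibniz coboundary (0-based list positions; list position a is g_{a+1}).\<close>
definition cobdry :: "nat \<Rightarrow> nat \<Rightarrow> (vf list \<Rightarrow> vf) \<Rightarrow> vf list \<Rightarrow> vf" where
  "cobdry p q f xs = (\<lambda>x k.
      br p q (hd xs) (f (tl xs)) x k
    + (\<Sum>a\<in>{1..<length xs}. (-1) ^ (a + 1) * br p q (f (del a xs)) (xs ! a) x k)
    + (\<Sum>b\<in>{1..<length xs}. \<Sum>a\<in>{..<b}.
         (-1) ^ b * f (del b (xs[a := br p q (xs ! a) (xs ! b)])) x k))"

definition eq_on :: "nat \<Rightarrow> nat \<Rightarrow> nat \<Rightarrow> (vf list \<Rightarrow> vf) \<Rightarrow> (vf list \<Rightarrow> vf) \<Rightarrow> bool" where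
  "eq_on p q k f g = (\<forall>xs. length xs = k \<and> set xs \<subseteq> hpq p q \<longrightarrow> f xs = g xs)"

definition ZL :: "nat \<Rightarrow> nat \<Rightarrow> nat \<Rightarrow> (vf list \<Rightarrow> vf) set" where
  "ZL p q k = {f \<in> CL p q k. eq_on p q (Suc k) (cobdry p q f) (\<lambda>_. vzero)}"

definition BL :: "nat \<Rightarrow> nat \<Rightarrow> nat \<Rightarrow> (vf list \<Rightarrow> vf) set" where
  "BL p q k = (if k = 0 then {f \<in> CL p q 0. eq_on p q 0 f (\<lambda>_. vzero)}
     else {f \<in> CL p q k. \<exists>g\<in>CL p q (k - 1). eq_on p q k f (cobdry p q g)})"

end

theory Submission
  imports Defs
begin

text \<open>Every field of h_{p,q} is affine, x \<mapsto> A x + b with A in so(p,q), every such field lies in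
  h_{p,q}, and brackets of affine fields are computed by matrix commutators. A Leibniz 0-cocycle
  is a central element, and the centre is trivial: bracketing with translations kills A and
  bracketing with rotations kills b. A Leibniz 1-cocycle is exactly a derivation D. The relations
  [d_i, d_j] = 0 and [A, d_i] = - A e_i show that D maps translations to translations by a matrix M
  and acts on linear fields as the commutator with M; rotations force M = lam 1 + N with N in
  so(p,q). The relations between the rotation generators, which need four distinct indices, show
  that D differs from lam I by the inner derivation X \<mapsto> [X, N x + d] for a single vector d.
  Finally I is not inner, because matrices in so(p,q) have zero diagonal.\<close>

section \<open>Affine vector fields\<close>

definition eta :: "nat \<Rightarrow> nat \<Rightarrow> real" where
  "eta p k = (if k \<le> p then 1 else -1)"

definition affine :: "nat \<Rightarrow> nat \<Rightarrow> (nat \<Rightarrow> nat \<Rightarrow> real) \<Rightarrow> (nat \<Rightarrow> real) \<Rightarrow> vf" where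
  "affine p q A b = (\<lambda>x k. if k \<in> {1..p+q} then (\<Sum>l=1..p+q. A k l * x l) + b k else 0)"

definition mat_mul :: "nat \<Rightarrow> nat \<Rightarrow> (nat \<Rightarrow> nat \<Rightarrow> real) \<Rightarrow> (nat \<Rightarrow> nat \<Rightarrow> real) \<Rightarrow> nat \<Rightarrow> nat \<Rightarrow> real" where
  "mat_mul p q A B = (\<lambda>k l. \<Sum>r=1..p+q. A k r * B r l)"

definition mat_vec :: "nat \<Rightarrow> nat \<Rightarrow> (nat \<Rightarrow> nat \<Rightarrow> real) \<Rightarrow> (nat \<Rightarrow> real) \<Rightarrow> nat \<Rightarrow> real" where
  "mat_vec p q A v = (\<lambda>k. \<Sum>r=1..p+q. A k r * v r)"

text \<open>The Lie algebra so(p,q) of the form diag(eta p 1, ..., eta p (p+q)).\<close>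
definition eta_skew :: "nat \<Rightarrow> nat \<Rightarrow> (nat \<Rightarrow> nat \<Rightarrow> real) \<Rightarrow> bool" where
  "eta_skew p q A \<longleftrightarrow> (\<forall>k\<in>{1..p+q}. \<forall>l\<in>{1..p+q}. eta p k * A k l = - (eta p l * A l k))"

definition basis_vec :: "nat \<Rightarrow> nat \<Rightarrow> real" where
  "basis_vec i = (\<lambda>k. if k = i then 1 else 0)"

text \<open>alpha i j and beta i j are the linear fields with matrix gen p i j = E_ji - eta_i eta_j E_ij.\<close>
definition gen :: "nat \<Rightarrow> nat \<Rightarrow> nat \<Rightarrow> nat \<Rightarrow> nat \<Rightarrow> real" where
  "gen p i j = (\<lambda>k l. if k = j \<and> l = i then 1
                       else if k = i \<and> l = j then - (eta p i * eta p j) else 0)"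

lemma eta_sq [simp]: "eta p k * eta p k = 1"
  by (simp add: eta_def)

lemma eta_nonzero [simp]: "eta p k \<noteq> 0"
  by (simp add: eta_def)

lemma sum_basis_vec_right: "l \<in> {1..n} \<Longrightarrow> (\<Sum>m=1..n. A m * basis_vec l m) = A l"
  by (simp add: basis_vec_def if_distrib cong: if_cong)

lemma sum_basis_vec_left:
  assumes "k \<in> {1..n}"
  shows "(\<Sum>i=1..n. c i * basis_vec i k) = c k"
proof -
  have "(\<Sum>i=1..n. c i * basis_vec i k) = (\<Sum>i=1..n. if k = i then c i else 0)"
    by (rule sum.cong) (auto simp: basis_vec_def)
  then show ?thesis
    using assms by simp
qed

lemma mat_vec_basis_vec: "j \<in> {1..p+q} \<Longrightarrow> mat_vec p q A (basis_vec j) k = A k j"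
  using sum_basis_vec_right[of j "p+q" "\<lambda>m. A k m"] by (simp add: mat_vec_def)

lemma mat_mul_zero [simp]:
  "mat_mul p q (\<lambda>_ _. 0) B k l = 0" "mat_mul p q A (\<lambda>_ _. 0) k l = 0"
  by (simp_all add: mat_mul_def)

lemma mat_vec_zero [simp]:
  "mat_vec p q (\<lambda>_ _. 0) v k = 0" "mat_vec p q A (\<lambda>_. 0) k = 0"
  by (simp_all add: mat_vec_def)

lemma mat_mul_lin_left:
  "mat_mul p q (\<lambda>k l. A k l + c * B k l) X k l = mat_mul p q A X k l + c * mat_mul p q B X k l"
  by (simp add: mat_mul_def sum.distrib sum_distrib_left algebra_simps)

lemma mat_mul_lin_right:
  "mat_mul p q X (\<lambda>k l. A k l + c * B k l) k l = mat_mul p q X A k l + c * mat_mul p q X B k l"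
  by (simp add: mat_mul_def sum.distrib sum_distrib_left algebra_simps)

lemma mat_vec_lin_left:
  "mat_vec p q (\<lambda>k l. A k l + c * B k l) v k = mat_vec p q A v k + c * mat_vec p q B v k"
  by (simp add: mat_vec_def sum.distrib sum_distrib_left algebra_simps)

lemma mat_vec_lin_right:
  "mat_vec p q X (\<lambda>k. a k + c * b k) k = mat_vec p q X a k + c * mat_vec p q X b k"
  by (simp add: mat_vec_def sum.distrib sum_distrib_left algebra_simps)

lemma affine_eq_iff:
  "affine p q A b = affine p q A' b' \<longleftrightarrow>
     (\<forall>k\<in>{1..p+q}. \<forall>l\<in>{1..p+q}. A k l = A' k l) \<and> (\<forall>k\<in>{1..p+q}. b k = b' k)"
proof
  assume h: "affine p q A b = affine p q A' b'"
  have b: "b k = b' k" if "k \<in> {1..p+q}" for k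
    using fun_cong[OF fun_cong[OF h, of "\<lambda>_. 0"], of k] that by (simp add: affine_def)
  moreover have "A k l = A' k l" if "k \<in> {1..p+q}" "l \<in> {1..p+q}" for k l
  proof -
    have "(\<Sum>m=1..p+q. A k m * basis_vec l m) + b k = (\<Sum>m=1..p+q. A' k m * basis_vec l m) + b' k"
      using fun_cong[OF fun_cong[OF h, of "basis_vec l"], of k] that by (simp only: affine_def if_True)
    then show ?thesis
      using sum_basis_vec_right[OF that(2), of "A k"] sum_basis_vec_right[OF that(2), of "A' k"] b[OF that(1)]
      by simp
  qed
  ultimately show "(\<forall>k\<in>{1..p+q}. \<forall>l\<in>{1..p+q}. A k l = A' k l) \<and> (\<forall>k\<in>{1..p+q}. b k = b' k)"
    by blast
next
  assume "(\<forall>k\<in>{1..p+q}. \<forall>l\<in>{1..p+q}. A k l = A' k l) \<and> (\<forall>k\<in>{1..p+q}. b k = b' k)"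
  then show "affine p q A b = affine p q A' b'"
    by (auto simp: affine_def intro!: ext sum.cong)
qed

lemma vzero_affine: "vzero = affine p q (\<lambda>_ _. 0) (\<lambda>_. 0)"
  by (auto simp: vzero_def affine_def intro!: ext)

lemma vadd_affine:
  "vadd (affine p q A a) (affine p q B b) = affine p q (\<lambda>k l. A k l + B k l) (\<lambda>k. a k + b k)"
  by (auto simp: vadd_def affine_def algebra_simps sum.distrib intro!: ext)

lemma vsc_affine: "vsc c (affine p q A b) = affine p q (\<lambda>k l. c * A k l) (\<lambda>k. c * b k)"
  by (auto simp: vsc_def affine_def algebra_simps sum_distrib_left intro!: ext)

lemma affine_outside: "k \<notin> {1..p+q} \<Longrightarrow> affine p q A b x k = 0"
  by (simp only: affine_def if_not_P if_False)

lemma sum_affine: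
  "(\<lambda>x k. \<Sum>s\<in>S. w s * affine p q (M s) (v s) x k)
     = affine p q (\<lambda>k l. \<Sum>s\<in>S. w s * M s k l) (\<lambda>k. \<Sum>s\<in>S. w s * v s k)"
proof (intro ext)
  fix x k
  show "(\<Sum>s\<in>S. w s * affine p q (M s) (v s) x k)
      = affine p q (\<lambda>k l. \<Sum>s\<in>S. w s * M s k l) (\<lambda>k. \<Sum>s\<in>S. w s * v s k) x k"
  proof (cases "k \<in> {1..p+q}")
    case True
    have "(\<Sum>s\<in>S. w s * affine p q (M s) (v s) x k)
        = (\<Sum>s\<in>S. (\<Sum>l=1..p+q. w s * M s k l * x l) + w s * v s k)"
      using True by (auto simp: affine_def algebra_simps sum_distrib_left intro!: sum.cong)
    also have "\<dots> = (\<Sum>l=1..p+q. \<Sum>s\<in>S. w s * M s k l * x l) + (\<Sum>s\<in>S. w s * v s k)"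
      by (simp add: sum.distrib sum.swap[of _ S])
    finally show ?thesis
      using True by (simp add: affine_def sum_distrib_right)
  qed (simp add: affine_outside)
qed

lemma pd_affine:
  assumes "l \<in> {1..p+q}"
  shows "pd l (\<lambda>y. affine p q B c y k) x = (if k \<in> {1..p+q} then B k l else 0)"
proof (cases "k \<in> {1..p+q}")
  case False
  then have "affine p q B c y k = 0" for y
    by (rule affine_outside)
  then show ?thesis
    unfolding pd_def by (subst if_not_P[OF False]) simp
next
  case True
  let ?S = "{1..p+q}"
  have line: "(\<lambda>t. affine p q B c (x(l := t)) k) = (\<lambda>t. B k l * t + ((\<Sum>m\<in>?S-{l}. B k m * x m) + c k))"
  proof
    fix t
    have "(\<Sum>m\<in>?S. B k m * (x(l := t)) m) = B k l * t + (\<Sum>m\<in>?S-{l}. B k m * (x(l := t)) m)"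
      using assms by (simp add: sum.remove)
    also have "(\<Sum>m\<in>?S-{l}. B k m * (x(l := t)) m) = (\<Sum>m\<in>?S-{l}. B k m * x m)"
      by (rule sum.cong) auto
    finally show "affine p q B c (x(l := t)) k = B k l * t + ((\<Sum>m\<in>?S-{l}. B k m * x m) + c k)"
      using True by (simp add: affine_def)
  qed
  have "((\<lambda>t. B k l * t + ((\<Sum>m\<in>?S-{l}. B k m * x m) + c k)) has_real_derivative B k l) (at (x l))"
    by (auto intro!: derivative_eq_intros)
  then show ?thesis
    using True unfolding pd_def line by (simp add: DERIV_imp_deriv)
qed

lemma sum_sum_swap_mult:
  fixes A B :: "nat \<Rightarrow> nat \<Rightarrow> real"
  shows "(\<Sum>l\<in>S. (\<Sum>m\<in>T. A l m * x m) * B k l) = (\<Sum>m\<in>T. (\<Sum>l\<in>S. B k l * A l m) * x m)"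
proof -
  have "(\<Sum>l\<in>S. (\<Sum>m\<in>T. A l m * x m) * B k l) = (\<Sum>l\<in>S. \<Sum>m\<in>T. B k l * A l m * x m)"
    by (subst sum_distrib_right) (simp add: sum_distrib_left mult_ac)
  also have "\<dots> = (\<Sum>m\<in>T. \<Sum>l\<in>S. B k l * A l m * x m)"
    by (rule sum.swap)
  finally show ?thesis
    by (simp add: sum_distrib_right)
qed

lemma br_affine:
  "br p q (affine p q A a) (affine p q B b)
     = affine p q (\<lambda>k l. mat_mul p q B A k l - mat_mul p q A B k l)
                  (\<lambda>k. mat_vec p q B a k - mat_vec p q A b k)"
proof (intro ext)
  fix x k
  let ?S = "{1..p+q}"
  show "br p q (affine p q A a) (affine p q B b) x k
      = affine p q (\<lambda>k l. mat_mul p q B A k l - mat_mul p q A B k l)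
                   (\<lambda>k. mat_vec p q B a k - mat_vec p q A b k) x k"
  proof (cases "k \<in> ?S")
    case False
    have "br p q (affine p q A a) (affine p q B b) x k = 0"
      unfolding br_def by (rule sum.neutral) (use False in \<open>auto simp: pd_affine\<close>)
    then show ?thesis
      using affine_outside[OF False] by simp
  next
    case True
    have "br p q (affine p q A a) (affine p q B b) x k
        = (\<Sum>l\<in>?S. affine p q A a x l * B k l - affine p q B b x l * A k l)"
      unfolding br_def using True by (intro sum.cong) (auto simp: pd_affine)
    also have "\<dots> = (\<Sum>l\<in>?S. ((\<Sum>m\<in>?S. A l m * x m) + a l) * B k l - ((\<Sum>m\<in>?S. B l m * x m) + b l) * A k l)"
      by (intro sum.cong) (auto simp: affine_def)
    also have "\<dots> = (\<Sum>l\<in>?S. (\<Sum>m\<in>?S. A l m * x m) * B k l) + (\<Sum>l\<in>?S. B k l * a l)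
        - ((\<Sum>l\<in>?S. (\<Sum>m\<in>?S. B l m * x m) * A k l) + (\<Sum>l\<in>?S. A k l * b l))"
      by (simp add: sum_subtractf sum.distrib algebra_simps)
    also have "\<dots> = (\<Sum>m\<in>?S. (\<Sum>l\<in>?S. B k l * A l m) * x m) + (\<Sum>l\<in>?S. B k l * a l)
        - ((\<Sum>m\<in>?S. (\<Sum>l\<in>?S. A k l * B l m) * x m) + (\<Sum>l\<in>?S. A k l * b l))"
      unfolding sum_sum_swap_mult ..
    also have "\<dots> = affine p q (\<lambda>k l. mat_mul p q B A k l - mat_mul p q A B k l)
                   (\<lambda>k. mat_vec p q B a k - mat_vec p q A b k) x k"
      using True by (simp add: affine_def mat_mul_def mat_vec_def algebra_simps sum_subtractf)
    finally show ?thesis .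
  qed
qed

lemma mat_vec_gen:
  assumes "i \<in> {1..p+q}" "j \<in> {1..p+q}" "i \<noteq> j"
  shows "mat_vec p q (gen p i j) v m
           = (if m = j then v i else if m = i then - (eta p i * eta p j) * v j else 0)"
proof -
  consider "m = j" | "m = i" | "m \<noteq> i" "m \<noteq> j" by blast
  then show ?thesis
  proof cases
    case 1
    then have "mat_vec p q (gen p i j) v m = (\<Sum>r=1..p+q. if r = i then v r else 0)"
      using assms(3) unfolding mat_vec_def gen_def by (intro sum.cong) auto
    then show ?thesis using 1 assms by simp
  next
    case 2
    then have "mat_vec p q (gen p i j) v m = (\<Sum>r=1..p+q. if r = j then - (eta p i * eta p j) * v r else 0)"
      using assms(3) unfolding mat_vec_def gen_def by (intro sum.cong) auto
    then show ?thesis using 2 assms by simp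
  next
    case 3
    then have "mat_vec p q (gen p i j) v m = (\<Sum>r=1..p+q. 0)"
      unfolding mat_vec_def gen_def by (intro sum.cong) auto
    then show ?thesis using 3 by simp
  qed
qed

lemma mat_mul_gen_left:
  assumes "i \<in> {1..p+q}" "j \<in> {1..p+q}" "i \<noteq> j"
  shows "mat_mul p q (gen p i j) B m l
           = (if m = j then B i l else if m = i then - (eta p i * eta p j) * B j l else 0)"
  using mat_vec_gen[OF assms, of "\<lambda>r. B r l" m] by (simp add: mat_mul_def mat_vec_def)

lemma mat_mul_gen_right:
  assumes "i \<in> {1..p+q}" "j \<in> {1..p+q}" "i \<noteq> j"
  shows "mat_mul p q B (gen p i j) m l
           = (if l = i then B m j else if l = j then - (eta p i * eta p j) * B m i else 0)"
proof -
  consider "l = i" | "l = j" | "l \<noteq> i" "l \<noteq> j" by blast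
  then show ?thesis
  proof cases
    case 1
    then have "mat_mul p q B (gen p i j) m l = (\<Sum>r=1..p+q. if r = j then B m r else 0)"
      using assms(3) unfolding mat_mul_def gen_def by (intro sum.cong) auto
    then show ?thesis using 1 assms by simp
  next
    case 2
    then have "mat_mul p q B (gen p i j) m l = (\<Sum>r=1..p+q. if r = i then - (eta p i * eta p j) * B m r else 0)"
      using assms(3) unfolding mat_mul_def gen_def by (intro sum.cong) auto
    then show ?thesis using 2 assms by simp
  next
    case 3
    then have "mat_mul p q B (gen p i j) m l = (\<Sum>r=1..p+q. 0)"
      unfolding mat_mul_def gen_def by (intro sum.cong) auto
    then show ?thesis using 3 by simp
  qed
qed

lemma gen_swap: "i \<noteq> j \<Longrightarrow> gen p j i = (\<lambda>k l. - (eta p i * eta p j) * gen p i j k l)"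
  by (auto simp: gen_def eta_def intro!: ext)

lemma gen_commute:
  assumes "i \<in> {1..p+q}" "j \<in> {1..p+q}" "k \<in> {1..p+q}" "l \<in> {1..p+q}"
    and "i \<noteq> j" "k \<noteq> l" "i \<noteq> k" "i \<noteq> l" "j \<noteq> k" "j \<noteq> l"
  shows "mat_mul p q (gen p i j) (gen p k l) m n - mat_mul p q (gen p k l) (gen p i j) m n = 0"
  unfolding mat_mul_gen_left[OF assms(1,2,5)] mat_mul_gen_left[OF assms(3,4,6)]
  using assms(5-) by (simp add: gen_def)

lemma gen_bracket:
  assumes "i \<in> {1..p+q}" "j \<in> {1..p+q}" "k \<in> {1..p+q}" "i \<noteq> j" "i \<noteq> k" "j \<noteq> k"
  shows "mat_mul p q (gen p i j) (gen p j k) m n - mat_mul p q (gen p j k) (gen p i j) m n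
           = - gen p i k m n"
  unfolding mat_mul_gen_left[OF assms(1,2,4)] mat_mul_gen_left[OF assms(2,3,6)]
  using assms(4-) by (cases "i \<le> p"; cases "j \<le> p"; cases "k \<le> p") (auto simp: gen_def eta_def)

lemma eta_skew_zero: "eta_skew p q (\<lambda>_ _. 0)"
  by (simp add: eta_skew_def)

lemma eta_skew_gen: "i \<noteq> j \<Longrightarrow> eta_skew p q (gen p i j)"
  by (auto simp: eta_skew_def gen_def algebra_simps)

lemma eta_skew_lin:
  "eta_skew p q A \<Longrightarrow> eta_skew p q B \<Longrightarrow> eta_skew p q (\<lambda>k l. A k l + c * B k l)"
  unfolding eta_skew_def
proof (intro ballI)
  fix k l assume A: "\<forall>k\<in>{1..p+q}. \<forall>l\<in>{1..p+q}. eta p k * A k l = - (eta p l * A l k)"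
    and B: "\<forall>k\<in>{1..p+q}. \<forall>l\<in>{1..p+q}. eta p k * B k l = - (eta p l * B l k)"
    and k: "k \<in> {1..p+q}" and l: "l \<in> {1..p+q}"
  have "eta p k * (A k l + c * B k l) = eta p k * A k l + c * (eta p k * B k l)"
    by (simp add: algebra_simps)
  also have "\<dots> = - (eta p l * A l k) + c * - (eta p l * B l k)"
    using bspec[OF bspec[OF A k] l] bspec[OF bspec[OF B k] l] by (simp only:)
  also have "\<dots> = - (eta p l * (A l k + c * B l k))"
    by (simp add: algebra_simps)
  finally show "eta p k * (A k l + c * B k l) = - (eta p l * (A l k + c * B l k))" .
qed

lemma eta_skew_sum:
  assumes "\<And>s. s \<in> S \<Longrightarrow> eta_skew p q (M s)"
  shows "eta_skew p q (\<lambda>k l. \<Sum>s\<in>S. w s * M s k l)"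
  unfolding eta_skew_def
proof (intro ballI)
  fix k l assume k: "k \<in> {1..p+q}" and l: "l \<in> {1..p+q}"
  have "eta p k * (\<Sum>s\<in>S. w s * M s k l) = (\<Sum>s\<in>S. w s * (eta p k * M s k l))"
    by (simp add: sum_distrib_left mult_ac)
  also have "\<dots> = (\<Sum>s\<in>S. w s * - (eta p l * M s l k))"
  proof (rule sum.cong[OF refl])
    fix s assume "s \<in> S"
    then have "eta p k * M s k l = - (eta p l * M s l k)"
      using assms k l unfolding eta_skew_def by blast
    then show "w s * (eta p k * M s k l) = w s * - (eta p l * M s l k)"
      by simp
  qed
  also have "\<dots> = - (eta p l * (\<Sum>s\<in>S. w s * M s l k))"
    by (simp add: sum_distrib_left sum_negf mult_ac)
  finally show "eta p k * (\<Sum>s\<in>S. w s * M s k l) = - (eta p l * (\<Sum>s\<in>S. w s * M s l k))" .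
qed

lemma eta_skew_diag:
  assumes "eta_skew p q A" "k \<in> {1..p+q}"
  shows "A k k = 0"
proof -
  have "eta p k * A k k = - (eta p k * A k k)"
    using assms unfolding eta_skew_def by blast
  then have "eta p k * A k k = 0"
    by linarith
  then show ?thesis
    by simp
qed

section \<open>The algebra h_{p,q} as the affine fields with linear part in so(p,q)\<close>

lemma finite_Aidx: "finite (Aidx p q)"
  by (rule finite_subset[of _ "{1..p+q} \<times> {1..p+q}"]) (auto simp: Aidx_def)

lemma finite_Bidx: "finite (Bidx p q)"
  by (rule finite_subset[of _ "{1..p+q} \<times> {1..p+q}"]) (auto simp: Bidx_def)

lemma alpha_affine: "(i, j) \<in> Aidx p q \<Longrightarrow> alpha i j = affine p q (gen p i j) (\<lambda>_. 0)"
  by (intro ext) (use mat_vec_gen[of i p q j] in \<open>auto simp: alpha_def affine_def Aidx_def eta_def mat_vec_def\<close>)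

lemma beta_affine: "(i, j) \<in> Bidx p q \<Longrightarrow> beta i j = affine p q (gen p i j) (\<lambda>_. 0)"
  by (intro ext) (use mat_vec_gen[of i p q j] in \<open>auto simp: beta_def affine_def Bidx_def eta_def mat_vec_def\<close>)

lemma part_affine: "i \<in> {1..p+q} \<Longrightarrow> part i = affine p q (\<lambda>_ _. 0) (basis_vec i)"
  by (auto simp: part_def affine_def basis_vec_def intro!: ext)

definition lincomb_mat :: "nat \<Rightarrow> nat \<Rightarrow> (nat \<times> nat \<Rightarrow> real) \<Rightarrow> (nat \<times> nat \<Rightarrow> real) \<Rightarrow> nat \<Rightarrow> nat \<Rightarrow> real" where
  "lincomb_mat p q a b = (\<lambda>k l. (\<Sum>s\<in>Aidx p q. a s * gen p (fst s) (snd s) k l)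
                                + (\<Sum>s\<in>Bidx p q. b s * gen p (fst s) (snd s) k l))"

lemma lincomb_affine: "lincomb p q a b c = affine p q (lincomb_mat p q a b) c"
proof (intro ext)
  fix x k
  have "(\<Sum>(i,j)\<in>Aidx p q. a (i,j) * alpha i j x k)
      = (\<Sum>s\<in>Aidx p q. a s * affine p q (gen p (fst s) (snd s)) (\<lambda>_. 0) x k)"
    by (intro sum.cong) (auto simp: alpha_affine split: prod.splits)
  also have "\<dots> = affine p q (\<lambda>k l. \<Sum>s\<in>Aidx p q. a s * gen p (fst s) (snd s) k l) (\<lambda>_. 0) x k"
    by (simp add: fun_cong[OF fun_cong[OF sum_affine]])
  finally have A: "(\<Sum>(i,j)\<in>Aidx p q. a (i,j) * alpha i j x k) = \<dots>" .
  have "(\<Sum>(i,j)\<in>Bidx p q. b (i,j) * beta i j x k)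
      = (\<Sum>s\<in>Bidx p q. b s * affine p q (gen p (fst s) (snd s)) (\<lambda>_. 0) x k)"
    by (intro sum.cong) (auto simp: beta_affine split: prod.splits)
  also have "\<dots> = affine p q (\<lambda>k l. \<Sum>s\<in>Bidx p q. b s * gen p (fst s) (snd s) k l) (\<lambda>_. 0) x k"
    by (simp add: fun_cong[OF fun_cong[OF sum_affine]])
  finally have B: "(\<Sum>(i,j)\<in>Bidx p q. b (i,j) * beta i j x k) = \<dots>" .
  have translation: "affine p q (\<lambda>_ _. 0) (\<lambda>k. \<Sum>i\<in>{1..p+q}. c i * basis_vec i k) = affine p q (\<lambda>_ _. 0) c"
    unfolding affine_eq_iff by (blast intro: sum_basis_vec_left)
  have "(\<Sum>i=1..p+q. c i * part i x k) = (\<Sum>i\<in>{1..p+q}. c i * affine p q (\<lambda>_ _. 0) (basis_vec i) x k)"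
    by (intro sum.cong) (auto simp: part_affine)
  also have "\<dots> = affine p q (\<lambda>_ _. 0) c x k"
    unfolding fun_cong[OF fun_cong[OF sum_affine]] mult_zero_right sum.neutral_const translation ..
  finally have C: "(\<Sum>i=1..p+q. c i * part i x k) = \<dots>" .
  have "lincomb p q a b c x k
      = vadd (vadd (affine p q (\<lambda>k l. \<Sum>s\<in>Aidx p q. a s * gen p (fst s) (snd s) k l) (\<lambda>_. 0))
                   (affine p q (\<lambda>k l. \<Sum>s\<in>Bidx p q. b s * gen p (fst s) (snd s) k l) (\<lambda>_. 0)))
             (affine p q (\<lambda>_ _. 0) c) x k"
    unfolding lincomb_def A B C vadd_def ..
  also have "\<dots> = affine p q (lincomb_mat p q a b) c x k"
    unfolding vadd_affine lincomb_mat_def by simp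
  finally show "lincomb p q a b c x k = affine p q (lincomb_mat p q a b) c x k" .
qed

lemma eta_skew_lincomb_mat: "eta_skew p q (lincomb_mat p q a b)"
proof -
  have "eta_skew p q (\<lambda>k l. (\<Sum>s\<in>Aidx p q. a s * gen p (fst s) (snd s) k l)
                            + 1 * (\<Sum>s\<in>Bidx p q. b s * gen p (fst s) (snd s) k l))"
    by (intro eta_skew_lin eta_skew_sum eta_skew_gen) (auto simp: Aidx_def Bidx_def)
  then show ?thesis
    by (simp add: lincomb_mat_def)
qed

lemma eta_skew_flip:
  assumes "eta_skew p q A" "k \<in> {1..p+q}" "l \<in> {1..p+q}"
  shows "A l k * - (eta p k * eta p l) = A k l"
proof -
  have h: "eta p k * A k l = - (eta p l * A l k)"
    using assms unfolding eta_skew_def by blast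
  have "A k l = eta p k * (eta p k * A k l)"
    by (simp add: mult.assoc[symmetric])
  also have "\<dots> = A l k * - (eta p k * eta p l)"
    unfolding h by (simp add: algebra_simps)
  finally show ?thesis by simp
qed

lemma gen_as_deltas:
  "i \<noteq> j \<Longrightarrow> gen p i j k l = (if (i,j) = (l,k) then 1 else 0)
                                + (if (i,j) = (k,l) then - (eta p i * eta p j) else 0)"
  by (auto simp: gen_def)

lemma sum_two_deltas:
  fixes f g :: "'a \<Rightarrow> real"
  assumes "finite S"
  shows "(\<Sum>s\<in>S. f s * ((if s = t then 1 else 0) + (if s = u then g s else 0))) =
    (if t \<in> S then f t else 0) + (if u \<in> S then f u * g u else 0)"
proof -
  have "(\<Sum>s\<in>S. f s * ((if s = t then 1 else 0) + (if s = u then g s else 0))) =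
     (\<Sum>s\<in>S. if s = t then f s else 0) + (\<Sum>s\<in>S. if s = u then f s * g s else 0)"
    unfolding sum.distrib[symmetric] by (rule sum.cong) (auto simp: algebra_simps)
  then show ?thesis using assms by simp
qed

lemma sum_gen_deltas:
  assumes "\<And>s. s \<in> S \<Longrightarrow> fst s \<noteq> snd s"
  shows "(\<Sum>s\<in>S. w s * gen p (fst s) (snd s) k l)
    = (\<Sum>s\<in>S. w s * ((if s = (l,k) then 1 else 0) + (if s = (k,l) then - (eta p (fst s) * eta p (snd s)) else 0)))"
proof (rule sum.cong[OF refl])
  fix s assume "s \<in> S"
  then have "fst s \<noteq> snd s"
    by (rule assms)
  then show "w s * gen p (fst s) (snd s) k l
      = w s * ((if s = (l,k) then 1 else 0) + (if s = (k,l) then - (eta p (fst s) * eta p (snd s)) else 0))"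
    by (simp add: gen_as_deltas)
qed

text \<open>The entries of A below the diagonal are its coordinates in the basis gen p i j,
  (i, j) in Aidx p q \<union> Bidx p q.\<close>
lemma lincomb_mat_below_diagonal:
  assumes A: "eta_skew p q A" and k: "k \<in> {1..p+q}" and l: "l \<in> {1..p+q}"
  shows "lincomb_mat p q (\<lambda>s. A (snd s) (fst s)) (\<lambda>s. A (snd s) (fst s)) k l = A k l"
proof -
  have memA: "((i,j) \<in> Aidx p q) = (i < j \<and> (j \<le> p \<or> p < i))" if "i \<in> {1..p+q}" "j \<in> {1..p+q}" for i j
    using that by (auto simp: Aidx_def)
  have memB: "((i,j) \<in> Bidx p q) = (i \<le> p \<and> p < j)" if "i \<in> {1..p+q}" "j \<in> {1..p+q}" for i j
    using that by (auto simp: Bidx_def)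
  have distinctA: "fst s \<noteq> snd s" if "s \<in> Aidx p q" for s
    using that by (auto simp: Aidx_def)
  have distinctB: "fst s \<noteq> snd s" if "s \<in> Bidx p q" for s
    using that by (auto simp: Bidx_def)
  let ?delta = "\<lambda>s::nat \<times> nat. (if s = (l,k) then 1 else 0)
                  + (if s = (k,l) then - (eta p (fst s) * eta p (snd s)) else 0)"
  have ga: "(\<Sum>s\<in>Aidx p q. A (snd s) (fst s) * gen p (fst s) (snd s) k l)
      = (\<Sum>s\<in>Aidx p q. A (snd s) (fst s) * ?delta s)"
    by (rule sum_gen_deltas[OF distinctA])
  have gb: "(\<Sum>s\<in>Bidx p q. A (snd s) (fst s) * gen p (fst s) (snd s) k l)
      = (\<Sum>s\<in>Bidx p q. A (snd s) (fst s) * ?delta s)"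
    by (rule sum_gen_deltas[OF distinctB])
  have e: "lincomb_mat p q (\<lambda>s. A (snd s) (fst s)) (\<lambda>s. A (snd s) (fst s)) k l =
     (if l < k \<and> (k \<le> p \<or> p < l) then A k l else 0) + (if k < l \<and> (l \<le> p \<or> p < k) then A k l else 0)
   + ((if l \<le> p \<and> p < k then A k l else 0) + (if k \<le> p \<and> p < l then A k l else 0))"
    unfolding lincomb_mat_def ga gb sum_two_deltas[OF finite_Aidx]
      sum_two_deltas[OF finite_Bidx] memA[OF k l] memA[OF l k] memB[OF k l] memB[OF l k]
      fst_conv snd_conv eta_skew_flip[OF A k l] ..
  consider "k = l" | "k < l" "k \<le> p" "l \<le> p" | "k < l" "k \<le> p" "\<not> l \<le> p" | "k < l" "\<not> k \<le> p"
    | "l < k" "l \<le> p" "k \<le> p" | "l < k" "l \<le> p" "\<not> k \<le> p" | "l < k" "\<not> l \<le> p"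
    by linarith
  then show ?thesis
    unfolding e by cases (simp_all add: eta_skew_diag[OF A l])
qed

lemma hpq_iff_affine: "X \<in> hpq p q \<longleftrightarrow> (\<exists>A b. eta_skew p q A \<and> X = affine p q A b)"
proof
  assume "X \<in> hpq p q"
  then obtain a b c where "X = lincomb p q a b c"
    by (auto simp: hpq_def)
  then show "\<exists>A b. eta_skew p q A \<and> X = affine p q A b"
    using eta_skew_lincomb_mat lincomb_affine by blast
next
  assume "\<exists>A b. eta_skew p q A \<and> X = affine p q A b"
  then obtain A b where A: "eta_skew p q A" and X: "X = affine p q A b"
    by blast
  have "lincomb p q (\<lambda>s. A (snd s) (fst s)) (\<lambda>s. A (snd s) (fst s)) b = X"
    unfolding X lincomb_affine affine_eq_iff using lincomb_mat_below_diagonal[OF A] by auto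
  then show "X \<in> hpq p q"
    unfolding hpq_def by blast
qed

lemma affine_in_hpq: "eta_skew p q A \<Longrightarrow> affine p q A b \<in> hpq p q"
  using hpq_iff_affine by blast

lemma Imap_affine:
  assumes "eta_skew p q A"
  shows "Imap p q (affine p q A b) = affine p q (\<lambda>_ _. 0) b"
proof -
  let ?P = "\<lambda>Y. \<exists>a b' c. affine p q A b = lincomb p q a b' c \<and> Y = lincomb p q (\<lambda>_. 0) (\<lambda>_. 0) c"
  have "\<exists>Y. ?P Y"
    using affine_in_hpq[OF assms, of b] by (auto simp: hpq_def)
  from someI_ex[OF this] obtain a b' c where h: "affine p q A b = lincomb p q a b' c"
    and Y: "Imap p q (affine p q A b) = lincomb p q (\<lambda>_. 0) (\<lambda>_. 0) c"
    unfolding Imap_def by blast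
  have "\<forall>k\<in>{1..p+q}. b k = c k"
    using h unfolding lincomb_affine affine_eq_iff by blast
  then show ?thesis
    unfolding Y lincomb_affine affine_eq_iff by (simp add: lincomb_mat_def)
qed

definition lin_part :: "vf \<Rightarrow> nat \<Rightarrow> nat \<Rightarrow> real" where
  "lin_part X = (\<lambda>k l. X (basis_vec l) k - X (\<lambda>_. 0) k)"

definition trans_part :: "vf \<Rightarrow> nat \<Rightarrow> real" where
  "trans_part X = (\<lambda>k. X (\<lambda>_. 0) k)"

lemma lin_part_affine: "k \<in> {1..p+q} \<Longrightarrow> l \<in> {1..p+q} \<Longrightarrow> lin_part (affine p q A b) k l = A k l"
  using sum_basis_vec_right[of l "p+q" "A k"] by (simp add: lin_part_def affine_def)

lemma trans_part_affine: "k \<in> {1..p+q} \<Longrightarrow> trans_part (affine p q A b) k = b k"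
  by (simp add: trans_part_def affine_def)

lemma hpq_affine_parts:
  assumes "X \<in> hpq p q"
  shows "eta_skew p q (lin_part X) \<and> X = affine p q (lin_part X) (trans_part X)"
proof -
  obtain A b where A: "eta_skew p q A" and X: "X = affine p q A b"
    using assms hpq_iff_affine by blast
  have parts: "lin_part X k l = A k l" if "k \<in> {1..p+q}" "l \<in> {1..p+q}" for k l
    using that by (simp add: X lin_part_affine)
  have "eta_skew p q (lin_part X)"
    unfolding eta_skew_def
  proof (intro ballI)
    fix k l assume k: "k \<in> {1..p+q}" and l: "l \<in> {1..p+q}"
    show "eta p k * lin_part X k l = - (eta p l * lin_part X l k)"
      using A k l unfolding parts[OF k l] parts[OF l k] eta_skew_def by blast
  qed
  moreover have "X = affine p q (lin_part X) (trans_part X)"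
    unfolding affine_eq_iff X by (simp add: lin_part_affine trans_part_affine)
  ultimately show ?thesis ..
qed

lemma vzero_in_hpq: "vzero \<in> hpq p q"
  by (subst vzero_affine[of p q]) (rule affine_in_hpq[OF eta_skew_zero])

lemma hpq_lin_closed:
  assumes "u \<in> hpq p q" "v \<in> hpq p q"
  shows "vadd u (vsc c v) \<in> hpq p q"
proof -
  obtain A a where A: "eta_skew p q A" and u: "u = affine p q A a"
    using assms(1) hpq_iff_affine by blast
  obtain B b where B: "eta_skew p q B" and v: "v = affine p q B b"
    using assms(2) hpq_iff_affine by blast
  show ?thesis
    unfolding u v vsc_affine vadd_affine by (rule affine_in_hpq[OF eta_skew_lin[OF A B]])
qed

lemma eta_mat_mul_transpose:
  assumes A: "eta_skew p q A" and B: "eta_skew p q B" and k: "k \<in> {1..p+q}" and l: "l \<in> {1..p+q}"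
  shows "eta p k * mat_mul p q B A k l = eta p l * mat_mul p q A B l k"
proof -
  have "eta p k * (B k r * A r l) = eta p l * (A l r * B r k)" if r: "r \<in> {1..p+q}" for r
  proof -
    have hB: "eta p k * B k r = - (eta p r * B r k)" and hA: "eta p r * A r l = - (eta p l * A l r)"
      using A B k l r unfolding eta_skew_def by blast+
    have "eta p k * (B k r * A r l) = (eta p k * B k r) * A r l"
      by (simp only: mult.assoc)
    also have "\<dots> = - (B r k * (eta p r * A r l))"
      unfolding hB by (simp add: mult_ac)
    also have "\<dots> = eta p l * (A l r * B r k)"
      unfolding hA by (simp add: mult_ac)
    finally show ?thesis .
  qed
  then have "(\<Sum>r=1..p+q. eta p k * (B k r * A r l)) = (\<Sum>r=1..p+q. eta p l * (A l r * B r k))"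
    by (rule sum.cong[OF refl])
  then show ?thesis
    by (simp add: mat_mul_def sum_distrib_left)
qed

lemma eta_skew_commutator:
  assumes "eta_skew p q A" "eta_skew p q B"
  shows "eta_skew p q (\<lambda>k l. mat_mul p q B A k l - mat_mul p q A B k l)"
  unfolding eta_skew_def
proof (intro ballI)
  fix k l assume k: "k \<in> {1..p+q}" and l: "l \<in> {1..p+q}"
  have "eta p k * (mat_mul p q B A k l - mat_mul p q A B k l)
      = eta p k * mat_mul p q B A k l - eta p k * mat_mul p q A B k l"
    by (simp add: algebra_simps)
  also have "\<dots> = eta p l * mat_mul p q A B l k - eta p l * mat_mul p q B A l k"
    unfolding eta_mat_mul_transpose[OF assms k l] eta_mat_mul_transpose[OF assms(2,1) k l] ..
  also have "\<dots> = - (eta p l * (mat_mul p q B A l k - mat_mul p q A B l k))"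
    by (simp add: algebra_simps)
  finally show "eta p k * (mat_mul p q B A k l - mat_mul p q A B k l)
      = - (eta p l * (mat_mul p q B A l k - mat_mul p q A B l k))" .
qed

lemma br_in_hpq:
  assumes "X \<in> hpq p q" "Y \<in> hpq p q"
  shows "br p q X Y \<in> hpq p q"
proof -
  obtain A a where A: "eta_skew p q A" and X: "X = affine p q A a"
    using assms(1) hpq_iff_affine by blast
  obtain B b where B: "eta_skew p q B" and Y: "Y = affine p q B b"
    using assms(2) hpq_iff_affine by blast
  show ?thesis
    unfolding X Y br_affine by (rule affine_in_hpq[OF eta_skew_commutator[OF A B]])
qed

section \<open>Linear maps and derivations of h_{p,q}\<close>

definition hlinear :: "nat \<Rightarrow> nat \<Rightarrow> (vf \<Rightarrow> vf) \<Rightarrow> bool" where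
  "hlinear p q F \<longleftrightarrow>
     (\<forall>u\<in>hpq p q. \<forall>v\<in>hpq p q. \<forall>c. F (vadd u (vsc c v)) = vadd (F u) (vsc c (F v)))"

definition hderivation :: "nat \<Rightarrow> nat \<Rightarrow> (vf \<Rightarrow> vf) \<Rightarrow> bool" where
  "hderivation p q F \<longleftrightarrow> hlinear p q F \<and> (\<forall>X\<in>hpq p q. F X \<in> hpq p q) \<and>
     (\<forall>X\<in>hpq p q. \<forall>Y\<in>hpq p q. F (br p q X Y) = vadd (br p q (F X) Y) (br p q X (F Y)))"

lemma hlinear_zero:
  assumes "hlinear p q F"
  shows "F vzero = vzero"
proof -
  have cancel: "vadd X (vsc (-1) X) = vzero" for X
    by (simp add: vadd_def vsc_def vzero_def)
  have "F (vadd vzero (vsc (-1) vzero)) = vadd (F vzero) (vsc (-1) (F vzero))"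
    using assms vzero_in_hpq unfolding hlinear_def by blast
  then show ?thesis
    by (simp only: cancel)
qed

lemma hlinear_vsc:
  assumes "hlinear p q F" "v \<in> hpq p q"
  shows "F (vsc c v) = vsc c (F v)"
proof -
  have zero_plus: "vadd vzero X = X" for X
    by (simp add: vadd_def vzero_def)
  have "F (vadd vzero (vsc c v)) = vadd (F vzero) (vsc c (F v))"
    using assms vzero_in_hpq unfolding hlinear_def by blast
  then show ?thesis
    by (simp only: zero_plus hlinear_zero[OF assms(1)])
qed

lemma vsc_one [simp]: "vsc 1 v = v"
  by (simp add: vsc_def)

lemma hlinear_vadd:
  assumes "hlinear p q F" "u \<in> hpq p q" "v \<in> hpq p q"
  shows "F (vadd u v) = vadd (F u) (F v)"
  using assms unfolding hlinear_def by (metis vsc_one)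

lemma hpq_vadd_closed: "u \<in> hpq p q \<Longrightarrow> v \<in> hpq p q \<Longrightarrow> vadd u v \<in> hpq p q"
  using hpq_lin_closed[of u p q v 1] by simp

lemma vsum_insert:
  "a \<notin> S \<Longrightarrow> finite S \<Longrightarrow> (\<lambda>x k. \<Sum>s\<in>insert a S. w s * Y s x k)
     = vadd (\<lambda>x k. \<Sum>s\<in>S. w s * Y s x k) (vsc (w a) (Y a))"
  by (simp add: vadd_def vsc_def add.commute)

lemma hpq_sum_closed:
  assumes "finite S" "\<forall>s\<in>S. Y s \<in> hpq p q"
  shows "(\<lambda>x k. \<Sum>s\<in>S. w s * Y s x k) \<in> hpq p q"
  using assms
proof (induction S rule: finite_induct)
  case empty
  then show ?case
    using vzero_in_hpq by (simp add: vzero_def)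
next
  case (insert a S)
  then show ?case
    unfolding vsum_insert[OF insert(2,1)] by (simp add: hpq_lin_closed)
qed

lemma hlinear_sum:
  assumes "hlinear p q F" "finite S" "\<forall>s\<in>S. Y s \<in> hpq p q"
  shows "F (\<lambda>x k. \<Sum>s\<in>S. w s * Y s x k) = (\<lambda>x k. \<Sum>s\<in>S. w s * F (Y s) x k)"
  using assms(2,3)
proof (induction S rule: finite_induct)
  case empty
  then show ?case
    using hlinear_zero[OF assms(1)] by (simp add: vzero_def)
next
  case (insert a S)
  then have "F (vadd (\<lambda>x k. \<Sum>s\<in>S. w s * Y s x k) (vsc (w a) (Y a)))
      = vadd (F (\<lambda>x k. \<Sum>s\<in>S. w s * Y s x k)) (vsc (w a) (F (Y a)))"
    using assms(1) hpq_sum_closed unfolding hlinear_def by blast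
  then show ?case
    unfolding vsum_insert[OF insert(2,1)] using insert by simp
qed

lemma alpha_in_hpq: "(i, j) \<in> Aidx p q \<Longrightarrow> alpha i j \<in> hpq p q"
  by (auto simp: alpha_affine Aidx_def intro!: affine_in_hpq eta_skew_gen)

lemma beta_in_hpq: "(i, j) \<in> Bidx p q \<Longrightarrow> beta i j \<in> hpq p q"
  by (auto simp: beta_affine Bidx_def intro!: affine_in_hpq eta_skew_gen)

lemma part_in_hpq: "i \<in> {1..p+q} \<Longrightarrow> part i \<in> hpq p q"
  unfolding part_affine by (rule affine_in_hpq[OF eta_skew_zero])

lemma hlinear_lincomb:
  assumes "hlinear p q F"
  shows "F (lincomb p q a b c)
    = (\<lambda>x k. (\<Sum>s\<in>Aidx p q. a s * F (alpha (fst s) (snd s)) x k)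
            + (\<Sum>s\<in>Bidx p q. b s * F (beta (fst s) (snd s)) x k)
            + (\<Sum>i\<in>{1..p+q}. c i * F (part i) x k))"
proof -
  let ?SA = "\<lambda>x k. \<Sum>s\<in>Aidx p q. a s * alpha (fst s) (snd s) x k"
  let ?SB = "\<lambda>x k. \<Sum>s\<in>Bidx p q. b s * beta (fst s) (snd s) x k"
  let ?SC = "\<lambda>x k. \<Sum>i\<in>{1..p+q}. c i * part i x k"
  have A: "\<forall>s\<in>Aidx p q. alpha (fst s) (snd s) \<in> hpq p q"
    using alpha_in_hpq by auto
  have B: "\<forall>s\<in>Bidx p q. beta (fst s) (snd s) \<in> hpq p q"
    using beta_in_hpq by auto
  have C: "\<forall>i\<in>{1..p+q}. part i \<in> hpq p q"
    using part_in_hpq by auto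
  note closed = hpq_sum_closed[OF finite_Aidx A] hpq_sum_closed[OF finite_Bidx B]
    hpq_sum_closed[OF finite_atLeastAtMost C]
  have "lincomb p q a b c = vadd (vadd ?SA ?SB) ?SC"
    unfolding lincomb_def vadd_def by (simp add: case_prod_beta')
  then have "F (lincomb p q a b c) = vadd (vadd (F ?SA) (F ?SB)) (F ?SC)"
    using closed by (simp add: hlinear_vadd[OF assms] hpq_vadd_closed)
  then show ?thesis
    unfolding hlinear_sum[OF assms finite_Aidx A] hlinear_sum[OF assms finite_Bidx B]
      hlinear_sum[OF assms finite_atLeastAtMost C] vadd_def .
qed

lemma hlinear_eqI:
  assumes F: "hlinear p q F" and G: "hlinear p q G"
    and "\<And>i j. (i, j) \<in> Aidx p q \<Longrightarrow> F (alpha i j) = G (alpha i j)"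
    and "\<And>i j. (i, j) \<in> Bidx p q \<Longrightarrow> F (beta i j) = G (beta i j)"
    and "\<And>i. i \<in> {1..p+q} \<Longrightarrow> F (part i) = G (part i)"
    and "X \<in> hpq p q"
  shows "F X = G X"
proof -
  obtain a b c where X: "X = lincomb p q a b c"
    using \<open>X \<in> hpq p q\<close> by (auto simp: hpq_def)
  show ?thesis
    unfolding X hlinear_lincomb[OF F] hlinear_lincomb[OF G]
    using assms(3-5) by (intro ext arg_cong2[where f="(+)"] sum.cong refl) auto
qed

lemma hlinear_combine:
  assumes "hlinear p q F" "hlinear p q G"
  shows "hlinear p q (\<lambda>X. vadd (vsc c (F X)) (G X))"
  unfolding hlinear_def
proof (intro ballI allI)
  fix u v d assume "u \<in> hpq p q" "v \<in> hpq p q"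
  then have "F (vadd u (vsc d v)) = vadd (F u) (vsc d (F v))"
    "G (vadd u (vsc d v)) = vadd (G u) (vsc d (G v))"
    using assms unfolding hlinear_def by blast+
  then show "vadd (vsc c (F (vadd u (vsc d v)))) (G (vadd u (vsc d v)))
      = vadd (vadd (vsc c (F u)) (G u)) (vsc d (vadd (vsc c (F v)) (G v)))"
    by (simp add: vadd_def vsc_def algebra_simps)
qed

lemma hlinear_br_left:
  assumes "W \<in> hpq p q"
  shows "hlinear p q (\<lambda>X. br p q X W)"
  unfolding hlinear_def
proof (intro ballI allI)
  fix u v c assume "u \<in> hpq p q" "v \<in> hpq p q"
  then obtain A a B b where "u = affine p q A a" "v = affine p q B b"
    using hpq_iff_affine by metis
  moreover obtain C d where "W = affine p q C d"
    using assms hpq_iff_affine by blast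
  ultimately show "br p q (vadd u (vsc c v)) W = vadd (br p q u W) (vsc c (br p q v W))"
    by (simp add: vsc_affine vadd_affine br_affine affine_eq_iff mat_mul_lin_left mat_mul_lin_right
                  mat_vec_lin_left mat_vec_lin_right algebra_simps)
qed

lemma Imap_in_hpq: "X \<in> hpq p q \<Longrightarrow> Imap p q X \<in> hpq p q"
  using hpq_iff_affine Imap_affine affine_in_hpq eta_skew_zero by metis

lemma hlinear_Imap: "hlinear p q (Imap p q)"
  unfolding hlinear_def
proof (intro ballI allI)
  fix u v c assume "u \<in> hpq p q" "v \<in> hpq p q"
  then obtain A a B b where A: "eta_skew p q A" "u = affine p q A a"
    and B: "eta_skew p q B" "v = affine p q B b"
    using hpq_iff_affine by metis
  then show "Imap p q (vadd u (vsc c v)) = vadd (Imap p q u) (vsc c (Imap p q v))"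
    by (simp add: vsc_affine vadd_affine Imap_affine eta_skew_lin)
qed

lemma hderivation_Imap: "hderivation p q (Imap p q)"
  unfolding hderivation_def
proof (intro conjI ballI hlinear_Imap Imap_in_hpq)
  fix X Y assume "X \<in> hpq p q" "Y \<in> hpq p q"
  then obtain A a B b where A: "eta_skew p q A" "X = affine p q A a"
    and B: "eta_skew p q B" "Y = affine p q B b"
    using hpq_iff_affine by metis
  then show "Imap p q (br p q X Y) = vadd (br p q (Imap p q X) Y) (br p q X (Imap p q Y))"
    by (simp add: br_affine Imap_affine eta_skew_commutator vadd_affine affine_eq_iff)
qed

section \<open>Derivations are multiples of I plus inner derivations\<close>

lemma fresh_index:
  fixes a b c :: nat
  assumes "4 \<le> p + q"
  obtains i where "i \<in> {1..p+q}" "i \<noteq> a" "i \<noteq> b" "i \<noteq> c"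
proof -
  have "\<exists>i::nat. 1 \<le> i \<and> i \<le> 4 \<and> i \<noteq> a \<and> i \<noteq> b \<and> i \<noteq> c"
    by presburger
  then show ?thesis
    using assms that by force
qed

locale hpq_derivation =
  fixes p q :: nat and F :: "vf \<Rightarrow> vf"
  assumes derivation: "hderivation p q F" and dim: "4 \<le> p + q"
begin

definition Fmat :: "(nat \<Rightarrow> nat \<Rightarrow> real) \<Rightarrow> (nat \<Rightarrow> real) \<Rightarrow> nat \<Rightarrow> nat \<Rightarrow> real" where
  "Fmat A b = lin_part (F (affine p q A b))"

definition Fvec :: "(nat \<Rightarrow> nat \<Rightarrow> real) \<Rightarrow> (nat \<Rightarrow> real) \<Rightarrow> nat \<Rightarrow> real" where
  "Fvec A b = trans_part (F (affine p q A b))"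

lemma F_hlinear: "hlinear p q F"
  using derivation by (simp add: hderivation_def)

lemma F_affine_parts:
  assumes "eta_skew p q A"
  shows "F (affine p q A b) = affine p q (Fmat A b) (Fvec A b) \<and> eta_skew p q (Fmat A b)"
proof -
  have "F (affine p q A b) \<in> hpq p q"
    using derivation affine_in_hpq[OF assms] unfolding hderivation_def by blast
  then show ?thesis
    using hpq_affine_parts unfolding Fmat_def Fvec_def by blast
qed

lemma F_affine: "eta_skew p q A \<Longrightarrow> F (affine p q A b) = affine p q (Fmat A b) (Fvec A b)"
  using F_affine_parts by blast

lemma eta_skew_Fmat: "eta_skew p q A \<Longrightarrow> eta_skew p q (Fmat A b)"
  using F_affine_parts by blast

lemma Fvec_zero [simp]: "Fvec (\<lambda>_ _. 0) (\<lambda>_. 0) = (\<lambda>_. 0)"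
  unfolding Fvec_def vzero_affine[of p q, symmetric] hlinear_zero[OF F_hlinear]
  by (simp add: trans_part_def vzero_def)

lemma Fvec_cong: "affine p q A b = affine p q A' b' \<Longrightarrow> Fvec A b = Fvec A' b'"
  by (simp add: Fvec_def)

lemma Fvec_scale:
  assumes "eta_skew p q A"
  shows "Fvec (\<lambda>k l. c * A k l) (\<lambda>k. c * b k) = (\<lambda>k. c * Fvec A b k)"
  unfolding Fvec_def vsc_affine[symmetric] hlinear_vsc[OF F_hlinear affine_in_hpq[OF assms]]
  by (simp add: trans_part_def vsc_def)

lemma Fvec_bracket:
  assumes A: "eta_skew p q A" and B: "eta_skew p q B" and k: "k \<in> {1..p+q}"
  shows "Fvec (\<lambda>k l. mat_mul p q B A k l - mat_mul p q A B k l)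
              (\<lambda>k. mat_vec p q B a k - mat_vec p q A b k) k
    = mat_vec p q B (Fvec A a) k - mat_vec p q (Fmat A a) b k
      + (mat_vec p q (Fmat B b) a k - mat_vec p q A (Fvec B b) k)"
proof -
  have "F (br p q (affine p q A a) (affine p q B b))
      = vadd (br p q (F (affine p q A a)) (affine p q B b)) (br p q (affine p q A a) (F (affine p q B b)))"
    using derivation affine_in_hpq[OF A] affine_in_hpq[OF B] unfolding hderivation_def by blast
  then show ?thesis
    using k unfolding br_affine F_affine[OF A] F_affine[OF B] F_affine[OF eta_skew_commutator[OF A B]]
      vadd_affine affine_eq_iff by blast
qed

definition M :: "nat \<Rightarrow> nat \<Rightarrow> real" where
  "M k i = Fvec (\<lambda>_ _. 0) (basis_vec i) k"

lemma Fmat_translation_sym: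
  assumes i: "i \<in> {1..p+q}" and j: "j \<in> {1..p+q}" and k: "k \<in> {1..p+q}"
  shows "Fmat (\<lambda>_ _. 0) (basis_vec i) k j = Fmat (\<lambda>_ _. 0) (basis_vec j) k i"
  using Fvec_bracket[OF eta_skew_zero eta_skew_zero k, of "basis_vec i" "basis_vec j"]
  by (simp add: mat_vec_basis_vec[OF i] mat_vec_basis_vec[OF j])

text \<open>The array S i k j is eta-skew in (k, j) and symmetric in (i, j); once around the six-step
  cycle of these symmetries gives S = - S.\<close>
lemma Fmat_translation_zero:
  assumes i: "i \<in> {1..p+q}" and j: "j \<in> {1..p+q}" and k: "k \<in> {1..p+q}"
  shows "Fmat (\<lambda>_ _. 0) (basis_vec i) k j = 0"
proof -
  let ?S = "\<lambda>i k j. Fmat (\<lambda>_ _. 0) (basis_vec i) k j"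
  have skew: "eta p k * ?S i k j = - (eta p j * ?S i j k)"
    if "i \<in> {1..p+q}" "k \<in> {1..p+q}" "j \<in> {1..p+q}" for i k j
    using eta_skew_Fmat[OF eta_skew_zero] that unfolding eta_skew_def by blast
  have "eta p k * ?S i k j = - (eta p j * ?S i j k)" by (rule skew[OF i k j])
  also have "?S i j k = ?S k j i" by (rule Fmat_translation_sym[OF i k j])
  also have "eta p j * ?S k j i = - (eta p i * ?S k i j)" by (rule skew[OF k j i])
  also have "?S k i j = ?S j i k" by (rule Fmat_translation_sym[OF k j i])
  also have "eta p i * ?S j i k = - (eta p k * ?S j k i)" by (rule skew[OF j i k])
  also have "?S j k i = ?S i k j" by (rule Fmat_translation_sym[OF j i k])
  finally have "eta p k * ?S i k j = - (eta p k * ?S i k j)" by simp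
  then have "eta p k * ?S i k j = 0" by linarith
  then show ?thesis by simp
qed

lemma F_translation: "F (affine p q (\<lambda>_ _. 0) v) = affine p q (\<lambda>_ _. 0) (mat_vec p q M v)"
proof -
  have basis: "\<forall>s\<in>{1..p+q}. affine p q (\<lambda>_ _. 0) (basis_vec s) \<in> hpq p q"
    using affine_in_hpq[OF eta_skew_zero] by blast
  have "affine p q (\<lambda>_ _. 0) v = (\<lambda>x k. \<Sum>s\<in>{1..p+q}. v s * affine p q (\<lambda>_ _. 0) (basis_vec s) x k)"
    unfolding sum_affine affine_eq_iff using sum_basis_vec_left[of _ "p+q" v] by simp
  then have "F (affine p q (\<lambda>_ _. 0) v)
      = (\<lambda>x k. \<Sum>s\<in>{1..p+q}. v s * F (affine p q (\<lambda>_ _. 0) (basis_vec s)) x k)"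
    using hlinear_sum[OF F_hlinear finite_atLeastAtMost basis] by simp
  also have "\<dots> = (\<lambda>x k. \<Sum>s\<in>{1..p+q}.
      v s * affine p q (Fmat (\<lambda>_ _. 0) (basis_vec s)) (Fvec (\<lambda>_ _. 0) (basis_vec s)) x k)"
    by (simp add: F_affine[OF eta_skew_zero])
  also have "\<dots> = affine p q (\<lambda>_ _. 0) (mat_vec p q M v)"
    unfolding sum_affine affine_eq_iff
    by (simp add: Fmat_translation_zero M_def mat_vec_def mult.commute)
  finally show ?thesis .
qed

lemma Fvec_translation: "k \<in> {1..p+q} \<Longrightarrow> Fvec (\<lambda>_ _. 0) v k = mat_vec p q M v k"
  by (simp add: Fvec_def F_translation trans_part_affine)

lemma Fmat_linear:
  assumes A: "eta_skew p q A" and k: "k \<in> {1..p+q}" and i: "i \<in> {1..p+q}"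
  shows "Fmat A (\<lambda>_. 0) k i = mat_mul p q M A k i - mat_mul p q A M k i"
proof -
  have column: "Fvec (\<lambda>_ _. 0) (basis_vec i) = (\<lambda>r. M r i)"
    by (simp add: M_def)
  have "mat_vec p q M (\<lambda>r. - mat_vec p q A (basis_vec i) r) k
      = - mat_vec p q (Fmat A (\<lambda>_. 0)) (basis_vec i) k - mat_vec p q A (\<lambda>r. M r i) k"
    using Fvec_bracket[OF A eta_skew_zero k, of "\<lambda>_. 0" "basis_vec i"]
    by (simp add: Fvec_translation[OF k] column)
  moreover have "mat_vec p q A (basis_vec i) = (\<lambda>r. A r i)"
    using mat_vec_basis_vec[OF i] by blast
  moreover have "mat_vec p q M (\<lambda>r. - A r i) k = - mat_mul p q M A k i"
    by (simp add: mat_vec_def mat_mul_def sum_negf)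
  moreover have "mat_vec p q A (\<lambda>r. M r i) k = mat_mul p q A M k i"
    by (simp add: mat_vec_def mat_mul_def)
  ultimately show ?thesis
    using mat_vec_basis_vec[OF i, of "Fmat A (\<lambda>_. 0)" k] by simp
qed

lemma M_offdiag:
  assumes m: "m \<in> {1..p+q}" and j: "j \<in> {1..p+q}" and "m \<noteq> j"
  shows "eta p m * M m j = - (eta p j * M j m)"
proof -
  obtain i where i: "i \<in> {1..p+q}" "i \<noteq> m" "i \<noteq> j"
    using fresh_index[OF dim, of m j j] by blast
  have "eta p m * Fmat (gen p i j) (\<lambda>_. 0) m i = - (eta p i * Fmat (gen p i j) (\<lambda>_. 0) i m)"
    using eta_skew_Fmat[OF eta_skew_gen[OF i(3)]] m i(1) unfolding eta_skew_def by blast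
  moreover have "Fmat (gen p i j) (\<lambda>_. 0) m i = M m j"
    "Fmat (gen p i j) (\<lambda>_. 0) i m = eta p i * eta p j * M j m"
    using assms i by (simp_all add: Fmat_linear[OF eta_skew_gen] mat_mul_gen_left mat_mul_gen_right)
  ultimately show ?thesis
    by (cases "i \<le> p"; cases "j \<le> p") (simp_all add: eta_def)
qed

lemma M_diag:
  assumes i: "i \<in> {1..p+q}" and j: "j \<in> {1..p+q}"
  shows "M i i = M j j"
proof (cases "i = j")
  case False
  have "eta p j * Fmat (gen p i j) (\<lambda>_. 0) j i = - (eta p i * Fmat (gen p i j) (\<lambda>_. 0) i j)"
    using eta_skew_Fmat[OF eta_skew_gen[OF False]] i j unfolding eta_skew_def by blast
  moreover have "Fmat (gen p i j) (\<lambda>_. 0) j i = M j j - M i i"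
    "Fmat (gen p i j) (\<lambda>_. 0) i j = eta p i * eta p j * (M j j - M i i)"
    using i j False by (simp_all add: Fmat_linear[OF eta_skew_gen] mat_mul_gen_left mat_mul_gen_right
                                      algebra_simps)
  ultimately show ?thesis
    by (cases "i \<le> p"; cases "j \<le> p") (simp_all add: eta_def)
qed simp

definition lam :: real where
  "lam = M 1 1"

definition N :: "nat \<Rightarrow> nat \<Rightarrow> real" where
  "N k l = (if k = l then 0 else M k l)"

lemma eta_skew_N: "eta_skew p q N"
  unfolding eta_skew_def
proof (intro ballI)
  fix k l assume "k \<in> {1..p+q}" "l \<in> {1..p+q}"
  then show "eta p k * N k l = - (eta p l * N l k)"
    using M_offdiag[of k l] by (cases "k = l") (simp_all add: N_def)
qed

lemma M_decomp: "k \<in> {1..p+q} \<Longrightarrow> M k l = N k l + (if k = l then lam else 0)"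
  using M_diag[of k 1] dim by (auto simp: N_def lam_def)

lemma mat_mul_M_left:
  assumes k: "k \<in> {1..p+q}"
  shows "mat_mul p q M X k l = mat_mul p q N X k l + lam * X k l"
proof -
  have "mat_mul p q M X k l = (\<Sum>r=1..p+q. N k r * X r l + (if r = k then lam * X r l else 0))"
    unfolding mat_mul_def using k by (intro sum.cong refl) (auto simp: M_decomp algebra_simps)
  also have "\<dots> = mat_mul p q N X k l + lam * X k l"
    using k by (simp add: sum.distrib mat_mul_def)
  finally show ?thesis .
qed

lemma mat_mul_M_right:
  assumes l: "l \<in> {1..p+q}"
  shows "mat_mul p q X M k l = mat_mul p q X N k l + lam * X k l"
proof -
  have "mat_mul p q X M k l = (\<Sum>r=1..p+q. X k r * N r l + (if r = l then lam * X k r else 0))"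
    unfolding mat_mul_def using l by (intro sum.cong refl) (auto simp: M_decomp N_def algebra_simps)
  also have "\<dots> = mat_mul p q X N k l + lam * X k l"
    using l by (simp add: sum.distrib mat_mul_def mult.commute)
  finally show ?thesis .
qed

definition transl :: "nat \<Rightarrow> nat \<Rightarrow> nat \<Rightarrow> real" where
  "transl i j = Fvec (gen p i j) (\<lambda>_. 0)"

text \<open>gen p i j and gen p k l commute for disjoint index pairs; the fourth index l is where
  p + q \<ge> 4 is needed.\<close>
lemma transl_outside:
  assumes i: "i \<in> {1..p+q}" and j: "j \<in> {1..p+q}" and k: "k \<in> {1..p+q}" and l: "l \<in> {1..p+q}"
    and d: "i \<noteq> j" "i \<noteq> k" "i \<noteq> l" "j \<noteq> k" "j \<noteq> l" "k \<noteq> l"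
  shows "transl i j k = 0"
proof -
  have "Fvec (\<lambda>m n. mat_mul p q (gen p i j) (gen p k l) m n - mat_mul p q (gen p k l) (gen p i j) m n)
             (\<lambda>_. 0) = Fvec (\<lambda>_ _. 0) (\<lambda>_. 0)"
    by (rule Fvec_cong) (simp add: affine_eq_iff gen_commute[OF i j k l d(1,6,2,3,4,5)])
  then show ?thesis
    using Fvec_bracket[OF eta_skew_gen[OF d(6)] eta_skew_gen[OF d(1)] l, of "\<lambda>_. 0" "\<lambda>_. 0"] d
    by (simp add: mat_vec_gen[OF i j d(1)] mat_vec_gen[OF k l d(6)] transl_def)
qed

lemma transl_diag:
  assumes i: "i \<in> {1..p+q}" and j: "j \<in> {1..p+q}" and k: "k \<in> {1..p+q}"
    and d: "i \<noteq> j" "i \<noteq> k" "j \<noteq> k"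
  shows "transl i k k = transl i j j"
proof -
  have "Fvec (\<lambda>m n. mat_mul p q (gen p i j) (gen p j k) m n - mat_mul p q (gen p j k) (gen p i j) m n)
             (\<lambda>_. 0) = Fvec (\<lambda>m n. -1 * gen p i k m n) (\<lambda>_. -1 * 0)"
    by (rule Fvec_cong) (simp add: affine_eq_iff gen_bracket[OF i j k d])
  also have "\<dots> = (\<lambda>m. -1 * transl i k m)"
    unfolding Fvec_scale[OF eta_skew_gen[OF d(2)]] transl_def ..
  finally have "Fvec (\<lambda>m n. mat_mul p q (gen p i j) (gen p j k) m n - mat_mul p q (gen p j k) (gen p i j) m n)
                     (\<lambda>_. 0) = (\<lambda>m. -1 * transl i k m)" .
  then show ?thesis
    using Fvec_bracket[OF eta_skew_gen[OF d(3)] eta_skew_gen[OF d(1)] k, of "\<lambda>_. 0" "\<lambda>_. 0"] d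
    by (simp add: mat_vec_gen[OF i j d(1)] mat_vec_gen[OF j k d(3)] transl_def)
qed

lemma transl_swap:
  assumes "i \<noteq> j"
  shows "transl j i m = - (eta p i * eta p j) * transl i j m"
proof -
  have "transl j i = Fvec (\<lambda>k l. - (eta p i * eta p j) * gen p i j k l) (\<lambda>k. - (eta p i * eta p j) * 0)"
    unfolding transl_def gen_swap[OF assms] by simp
  also have "\<dots> = (\<lambda>k. - (eta p i * eta p j) * transl i j k)"
    unfolding transl_def Fvec_scale[OF eta_skew_gen[OF assms]] ..
  finally show ?thesis
    by simp
qed

definition partner :: "nat \<Rightarrow> nat" where
  "partner i = (if i = 1 then 2 else 1)"

definition dvec :: "nat \<Rightarrow> real" where
  "dvec i = - transl i (partner i) (partner i)"

lemma partner_in_range: "i \<in> {1..p+q} \<Longrightarrow> partner i \<in> {1..p+q} \<and> partner i \<noteq> i"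
  using dim by (auto simp: partner_def)

lemma transl_diag_dvec:
  assumes "i \<in> {1..p+q}" "j \<in> {1..p+q}" "i \<noteq> j"
  shows "transl i j j = - dvec i"
proof (cases "j = partner i")
  case False
  have "transl i (partner i) (partner i) = transl i j j"
    using partner_in_range[OF assms(1)] assms False by (intro transl_diag) auto
  then show ?thesis
    by (simp add: dvec_def)
qed (simp add: dvec_def)

lemma transl_eq:
  assumes i: "i \<in> {1..p+q}" and j: "j \<in> {1..p+q}" and m: "m \<in> {1..p+q}" and ij: "i \<noteq> j"
  shows "transl i j m = - mat_vec p q (gen p i j) dvec m"
proof -
  consider "m = j" | "m = i" | "m \<noteq> i" "m \<noteq> j" by blast
  then show ?thesis
  proof cases
    case 1
    then show ?thesis
      using transl_diag_dvec[OF i j ij] by (simp add: mat_vec_gen[OF i j ij])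
  next
    case 2
    then show ?thesis
      using transl_swap[of j i i] transl_diag_dvec[OF j i] ij by (simp add: mat_vec_gen[OF i j ij] mult.commute)
  next
    case 3
    obtain l where l: "l \<in> {1..p+q}" "l \<noteq> i" "l \<noteq> j" "l \<noteq> m"
      using fresh_index[OF dim, of i j m] by blast
    have "transl i j m = 0"
      by (rule transl_outside[OF i j m l(1)]) (use ij 3 l in auto)
    then show ?thesis
      using 3 by (simp add: mat_vec_gen[OF i j ij])
  qed
qed

definition H :: "vf \<Rightarrow> vf" where
  "H X = vadd (vsc lam (Imap p q X)) (br p q X (affine p q N dvec))"

lemma H_affine:
  assumes "eta_skew p q A"
  shows "H (affine p q A a) = affine p q (\<lambda>k l. mat_mul p q N A k l - mat_mul p q A N k l)
                                        (\<lambda>k. lam * a k + (mat_vec p q N a k - mat_vec p q A dvec k))"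
  unfolding H_def Imap_affine[OF assms] vsc_affine br_affine vadd_affine by simp

lemma hlinear_H: "hlinear p q H"
  unfolding H_def
  by (intro hlinear_combine hlinear_Imap hlinear_br_left affine_in_hpq eta_skew_N)

lemma F_eq_H_gen:
  assumes i: "i \<in> {1..p+q}" and j: "j \<in> {1..p+q}" and ij: "i \<noteq> j"
  shows "F (affine p q (gen p i j) (\<lambda>_. 0)) = H (affine p q (gen p i j) (\<lambda>_. 0))"
  unfolding F_affine[OF eta_skew_gen[OF ij]] H_affine[OF eta_skew_gen[OF ij]] affine_eq_iff
  using transl_eq[OF i j _ ij]
  by (simp add: Fmat_linear[OF eta_skew_gen[OF ij]] mat_mul_M_left mat_mul_M_right transl_def)

lemma F_eq_H_translation:
  assumes i: "i \<in> {1..p+q}"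
  shows "F (affine p q (\<lambda>_ _. 0) (basis_vec i)) = H (affine p q (\<lambda>_ _. 0) (basis_vec i))"
  unfolding F_translation H_affine[OF eta_skew_zero] affine_eq_iff
proof (intro conjI ballI)
  fix k assume "k \<in> {1..p+q}"
  then show "mat_vec p q M (basis_vec i) k
      = lam * basis_vec i k + (mat_vec p q N (basis_vec i) k - mat_vec p q (\<lambda>_ _. 0) dvec k)"
    unfolding mat_vec_basis_vec[OF i] by (simp add: M_decomp basis_vec_def)
qed simp

lemma F_eq_H: "X \<in> hpq p q \<Longrightarrow> F X = H X"
proof (rule hlinear_eqI[OF F_hlinear hlinear_H])
  fix i j assume "(i, j) \<in> Aidx p q"
  then show "F (alpha i j) = H (alpha i j)"
    unfolding alpha_affine[OF \<open>(i, j) \<in> Aidx p q\<close>] by (intro F_eq_H_gen) (auto simp: Aidx_def)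
next
  fix i j assume "(i, j) \<in> Bidx p q"
  then show "F (beta i j) = H (beta i j)"
    unfolding beta_affine[OF \<open>(i, j) \<in> Bidx p q\<close>] by (intro F_eq_H_gen) (auto simp: Bidx_def)
next
  fix i assume "i \<in> {1..p+q}"
  then show "F (part i) = H (part i)"
    unfolding part_affine[OF \<open>i \<in> {1..p+q}\<close>] by (rule F_eq_H_translation)
qed

end

theorem hderivation_decomp:
  assumes "hderivation p q F" "4 \<le> p + q"
  obtains c w where "w \<in> hpq p q" "\<And>X. X \<in> hpq p q \<Longrightarrow> F X = vadd (vsc c (Imap p q X)) (br p q X w)"
proof -
  interpret hpq_derivation p q F
    using assms by unfold_locales
  show ?thesis
    using that[of "affine p q N dvec" lam] affine_in_hpq[OF eta_skew_N] F_eq_H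
    by (simp add: H_def)
qed

section \<open>Leibniz cohomology in degrees 0 and 1\<close>

lemma cobdry_singleton: "cobdry p q f [X] = br p q X (f [])"
  by (simp add: cobdry_def)

lemma cobdry_pair:
  "cobdry p q f [X, Y] = (\<lambda>x k. br p q X (f [Y]) x k + br p q (f [X]) Y x k - f [br p q X Y] x k)"
  by (simp add: cobdry_def del_def numeral_2_eq_2 lessThan_Suc)

lemma length_one_iff: "length xs = 1 \<longleftrightarrow> (\<exists>X. xs = [X])"
  by (auto simp: length_Suc_conv)

lemma length_two_iff: "length xs = 2 \<longleftrightarrow> (\<exists>X Y. xs = [X, Y])"
  by (auto simp: length_Suc_conv numeral_2_eq_2)

lemma CL0_iff: "f \<in> CL p q 0 \<longleftrightarrow> f [] \<in> hpq p q"
  by (simp add: CL_def)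

lemma CL1_hlinear:
  assumes "f \<in> CL p q 1"
  shows "hlinear p q (\<lambda>X. f [X])" "X \<in> hpq p q \<Longrightarrow> f [X] \<in> hpq p q"
proof -
  have at: "f [X] \<in> hpq p q \<and> (\<forall>u\<in>hpq p q. \<forall>v\<in>hpq p q. \<forall>c.
              f [vadd u (vsc c v)] = vadd (f [u]) (vsc c (f [v])))" if "X \<in> hpq p q" for X
  proof -
    have "length [X] = 1 \<and> set [X] \<subseteq> hpq p q \<longrightarrow> f [X] \<in> hpq p q \<and>
        (\<forall>i<1. \<forall>u\<in>hpq p q. \<forall>v\<in>hpq p q. \<forall>c.
           f ([X][i := vadd u (vsc c v)]) = vadd (f ([X][i := u])) (vsc c (f ([X][i := v]))))"
      using assms unfolding CL_def by blast
    then show ?thesis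
      using that by simp
  qed
  show "hlinear p q (\<lambda>X. f [X])"
    using at[OF vzero_in_hpq] unfolding hlinear_def by blast
  show "X \<in> hpq p q \<Longrightarrow> f [X] \<in> hpq p q"
    using at by blast
qed

lemma hlinear_in_CL1:
  assumes "hlinear p q F" "\<And>X. X \<in> hpq p q \<Longrightarrow> F X \<in> hpq p q"
  shows "(\<lambda>xs. F (hd xs)) \<in> CL p q 1"
  using assms unfolding CL_def hlinear_def by (auto simp: length_Suc_conv)

lemma ZL1_hderivation:
  assumes "f \<in> ZL p q 1"
  shows "hderivation p q (\<lambda>X. f [X])"
proof -
  have f: "f \<in> CL p q 1" and cocycle: "eq_on p q 2 (cobdry p q f) (\<lambda>_. vzero)"
    using assms by (auto simp: ZL_def numeral_2_eq_2)
  have "f [br p q X Y] = vadd (br p q (f [X]) Y) (br p q X (f [Y]))"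
    if "X \<in> hpq p q" "Y \<in> hpq p q" for X Y
  proof -
    have "cobdry p q f [X, Y] = vzero"
      using cocycle that unfolding eq_on_def by auto
    then show ?thesis
      unfolding cobdry_pair by (auto simp: vadd_def vzero_def fun_eq_iff algebra_simps dest!: fun_cong)
  qed
  then show ?thesis
    using CL1_hlinear[OF f] unfolding hderivation_def by blast
qed

lemma hderivation_in_ZL1:
  assumes "hderivation p q F"
  shows "(\<lambda>xs. F (hd xs)) \<in> ZL p q 1"
proof -
  have "cobdry p q (\<lambda>xs. F (hd xs)) [X, Y] = vzero" if "X \<in> hpq p q" "Y \<in> hpq p q" for X Y
    using assms that unfolding hderivation_def cobdry_pair by (simp add: vadd_def vzero_def)
  then have "eq_on p q 2 (cobdry p q (\<lambda>xs. F (hd xs))) (\<lambda>_. vzero)"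
    unfolding eq_on_def length_two_iff by auto
  moreover have "(\<lambda>xs. F (hd xs)) \<in> CL p q 1"
    by (rule hlinear_in_CL1) (use assms in \<open>auto simp: hderivation_def\<close>)
  ultimately show ?thesis
    by (simp add: ZL_def numeral_2_eq_2)
qed

lemma inner_in_BL1:
  assumes "W \<in> hpq p q"
  shows "(\<lambda>xs. br p q (hd xs) W) \<in> BL p q 1"
proof -
  have "(\<lambda>xs. br p q (hd xs) W) \<in> CL p q 1"
    using assms by (intro hlinear_in_CL1 hlinear_br_left br_in_hpq)
  moreover have "eq_on p q 1 (\<lambda>xs. br p q (hd xs) W) (cobdry p q (\<lambda>_. W))"
    unfolding eq_on_def length_one_iff by (auto simp: cobdry_singleton)
  ultimately show ?thesis
    using assms by (auto simp: BL_def CL0_iff)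
qed

lemma hpq_centre_trivial:
  assumes "2 \<le> p + q" and W: "W \<in> hpq p q" and central: "\<And>X. X \<in> hpq p q \<Longrightarrow> br p q X W = vzero"
  shows "W = vzero"
proof -
  obtain C c where C: "eta_skew p q C" and Wc: "W = affine p q C c"
    using W hpq_iff_affine by blast
  have C0: "C k i = 0" if k: "k \<in> {1..p+q}" and i: "i \<in> {1..p+q}" for k i
    using central[OF affine_in_hpq[OF eta_skew_zero, of p q "basis_vec i"]] k
    unfolding Wc br_affine vzero_affine[of p q] affine_eq_iff by (simp add: mat_vec_basis_vec[OF i])
  have c0: "c i = 0" if i: "i \<in> {1..p+q}" for i
  proof -
    have "(if i = 1 then 2 else 1) \<in> {1..p+q} \<and> (if i = 1 then 2 else 1) \<noteq> i"
      using assms(1) i by auto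
    then obtain j where j: "j \<in> {1..p+q}" "j \<noteq> i"
      by blast
    have "affine p q (\<lambda>k l. mat_mul p q C (gen p i j) k l - mat_mul p q (gen p i j) C k l)
        (\<lambda>k. mat_vec p q C (\<lambda>_. 0) k - mat_vec p q (gen p i j) c k) = affine p q (\<lambda>_ _. 0) (\<lambda>_. 0)"
      using central[OF affine_in_hpq[OF eta_skew_gen[OF j(2)[symmetric]], of p q "\<lambda>_. 0"]]
      unfolding Wc br_affine vzero_affine[of p q] .
    then have "mat_vec p q C (\<lambda>_. 0) j - mat_vec p q (gen p i j) c j = 0"
      unfolding affine_eq_iff using j(1) by blast
    then show ?thesis
      by (simp add: mat_vec_gen[OF i j(1) j(2)[symmetric]])
  qed
  show ?thesis
    unfolding Wc vzero_affine[of p q] affine_eq_iff using C0 c0 by simp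
qed

lemma ZL0_subset_BL0:
  assumes "2 \<le> p + q"
  shows "ZL p q 0 \<subseteq> BL p q 0"
proof
  fix f assume "f \<in> ZL p q 0"
  then have f: "f \<in> CL p q 0" and cocycle: "eq_on p q 1 (cobdry p q f) (\<lambda>_. vzero)"
    by (auto simp: ZL_def)
  have "f [] = vzero"
  proof (rule hpq_centre_trivial[OF assms])
    show "f [] \<in> hpq p q"
      using f by (simp add: CL0_iff)
    show "br p q X (f []) = vzero" if "X \<in> hpq p q" for X
    proof -
      have "cobdry p q f [X] = vzero"
        using cocycle that unfolding eq_on_def by auto
      then show ?thesis
        by (simp add: cobdry_singleton)
    qed
  qed
  then show "f \<in> BL p q 0"
    using f by (simp add: BL_def eq_on_def)
qed

text \<open>A coboundary X \<mapsto> [X, W] sends part 1 to a field whose part 1 component is a diagonal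
  entry of the matrix of W, which vanishes.\<close>
lemma Imap_notin_BL1:
  assumes "1 \<le> p + q"
  shows "(\<lambda>xs. Imap p q (hd xs)) \<notin> BL p q 1"
proof
  assume "(\<lambda>xs. Imap p q (hd xs)) \<in> BL p q 1"
  then obtain g where g: "g \<in> CL p q 0" and coboundary: "eq_on p q 1 (\<lambda>xs. Imap p q (hd xs)) (cobdry p q g)"
    by (auto simp: BL_def)
  obtain C c where C: "eta_skew p q C" and gC: "g [] = affine p q C c"
    using g hpq_iff_affine by (auto simp: CL0_iff)
  have one: "1 \<in> {1..p+q}"
    using assms by simp
  let ?X = "affine p q (\<lambda>_ _. 0) (basis_vec 1)"
  have "length [?X] = 1 \<and> set [?X] \<subseteq> hpq p q \<longrightarrow> Imap p q (hd [?X]) = cobdry p q g [?X]"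
    using coboundary unfolding eq_on_def by blast
  then have "Imap p q ?X = cobdry p q g [?X]"
    using affine_in_hpq[OF eta_skew_zero, of p q "basis_vec 1"] by simp
  then have "?X = affine p q (\<lambda>k l. mat_mul p q C (\<lambda>_ _. 0) k l - mat_mul p q (\<lambda>_ _. 0) C k l)
                             (\<lambda>k. mat_vec p q C (basis_vec 1) k - mat_vec p q (\<lambda>_ _. 0) c k)"
    unfolding cobdry_singleton gC br_affine Imap_affine[OF eta_skew_zero] .
  then have "basis_vec 1 1 = mat_vec p q C (basis_vec 1) 1 - mat_vec p q (\<lambda>_ _. 0) c 1"
    unfolding affine_eq_iff using one by blast
  then have "basis_vec 1 1 = C 1 1"
    unfolding mat_vec_basis_vec[OF one] by simp
  then show False
    using eta_skew_diag[OF C one] by (simp add: basis_vec_def)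
qed

lemma ZL1_decomp:
  assumes "4 \<le> p + q" "f \<in> ZL p q 1"
  obtains c g where "g \<in> BL p q 1" "eq_on p q 1 f (\<lambda>xs. vadd (vsc c (Imap p q (hd xs))) (g xs))"
proof -
  obtain c w where w: "w \<in> hpq p q"
    and f: "\<And>X. X \<in> hpq p q \<Longrightarrow> f [X] = vadd (vsc c (Imap p q X)) (br p q X w)"
    using hderivation_decomp[OF ZL1_hderivation[OF assms(2)] assms(1)] by blast
  have "eq_on p q 1 f (\<lambda>xs. vadd (vsc c (Imap p q (hd xs))) (br p q (hd xs) w))"
    unfolding eq_on_def
  proof (intro allI impI)
    fix xs assume "length xs = 1 \<and> set xs \<subseteq> hpq p q"
    then obtain X where "xs = [X]" "X \<in> hpq p q"
      by (auto simp: length_Suc_conv)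
    then show "f xs = vadd (vsc c (Imap p q (hd xs))) (br p q (hd xs) w)"
      using f by simp
  qed
  then show ?thesis
    using that inner_in_BL1[OF w] by blast
qed

theorem lemma7p4:
  fixes p q :: nat
  assumes "p + q \<ge> 4"
  shows "ZL p q 0 \<subseteq> BL p q 0
    \<and> (\<lambda>xs. Imap p q (hd xs)) \<in> ZL p q 1
    \<and> (\<lambda>xs. Imap p q (hd xs)) \<notin> BL p q 1
    \<and> (\<forall>f\<in>ZL p q 1. \<exists>c::real. \<exists>g\<in>BL p q 1.
           eq_on p q 1 f (\<lambda>xs. vadd (vsc c (Imap p q (hd xs))) (g xs)))"
proof (intro conjI ballI)
  show "ZL p q 0 \<subseteq> BL p q 0"
    using assms by (intro ZL0_subset_BL0) simp
  show "(\<lambda>xs. Imap p q (hd xs)) \<in> ZL p q 1"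
    by (rule hderivation_in_ZL1[OF hderivation_Imap])
  show "(\<lambda>xs. Imap p q (hd xs)) \<notin> BL p q 1"
    using assms by (intro Imap_notin_BL1) simp
  fix f assume "f \<in> ZL p q 1"
  then obtain c g where "g \<in> BL p q 1" "eq_on p q 1 f (\<lambda>xs. vadd (vsc c (Imap p q (hd xs))) (g xs))"
    by (rule ZL1_decomp[OF assms])
  then show "\<exists>c. \<exists>g\<in>BL p q 1. eq_on p q 1 f (\<lambda>xs. vadd (vsc c (Imap p q (hd xs))) (g xs))"
    by blast
qed

end
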